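(* Let $n\ge2$ and let $u$ be a polar $n$-complex number. Then, with $\exp w=\sum_{j\ge0}w^j/j!$, for even $n$ $$e^u=e_+e^{v_+}+e_-e^{v_-}+\sum_{k=1}^{n/2-1}e^{v_k}\big(e_k\cos\tilde v_k+\tilde e_k\sin\tilde v_k\big),$$ and for odd $n$ $$e^u=e_+e^{v_+}+\sum_{k=1}^{(n-1)/2}e^{v_k}\big(e_k\cos\tilde v_k+\tilde e_k\sin\tilde v_k\big).$$
   Context: Polar $n$-complex numbers: $u=x_0+h_1x_1+\cdots+h_{n-1}x_{n-1}$, $x_j\in\mathbb{R}$, $h_0=1$, componentwise addition, bilinear multiplication $h_jh_k=h_{(j+k)\bmod n}$. Canonical variables: $v_+=\sum_px_p$; for even $n$, $v_-=\sum_p(-1)^px_p$; $v_k=\sum_px_p\cos(2\pi kp/n)$, $\tilde v_k=\sum_px_p\sin(2\pi kp/n)$ for $k=1,\dots,\lfloor(n-1)/2\rfloor$. Canonical base: $e_+=\frac1n\sum_ph_p$, $e_-=\frac1n\sum_p(-1)^ph_p$ (even $n$), $e_k=\frac2n\sum_p\cos(2\pi kp/n)h_p$, $\tilde e_k=\frac2n\sum_p\sin(2\pi kp/n)h_p$. *)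

theory Defs
  imports Complex_Main
begin

text \<open>A polar n-complex number u = x_0 + h_1 x_1 + ... + h_{n-1} x_{n-1} is represented
  by its component function x :: nat => real; only the components x 0, ..., x (n-1) matter.\<close>

definition pc_mult :: "nat \<Rightarrow> (nat \<Rightarrow> real) \<Rightarrow> (nat \<Rightarrow> real) \<Rightarrow> (nat \<Rightarrow> real)" where
  "pc_mult n u w = (\<lambda>m. \<Sum>j<n. \<Sum>k<n. if (j + k) mod n = m then u j * w k else 0)"

definition pc_one :: "nat \<Rightarrow> real" where
  "pc_one = (\<lambda>m. if m = 0 then 1 else 0)"

fun pc_pow :: "nat \<Rightarrow> (nat \<Rightarrow> real) \<Rightarrow> nat \<Rightarrow> (nat \<Rightarrow> real)" where
  "pc_pow n u 0 = pc_one"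
| "pc_pow n u (Suc j) = pc_mult n u (pc_pow n u j)"

definition v_plus :: "nat \<Rightarrow> (nat \<Rightarrow> real) \<Rightarrow> real" where
  "v_plus n x = (\<Sum>p<n. x p)"
definition v_minus :: "nat \<Rightarrow> (nat \<Rightarrow> real) \<Rightarrow> real" where
  "v_minus n x = (\<Sum>p<n. (-1) ^ p * x p)"
definition v_k :: "nat \<Rightarrow> (nat \<Rightarrow> real) \<Rightarrow> nat \<Rightarrow> real" where
  "v_k n x k = (\<Sum>p<n. x p * cos (2 * pi * real k * real p / real n))"
definition vt_k :: "nat \<Rightarrow> (nat \<Rightarrow> real) \<Rightarrow> nat \<Rightarrow> real" where
  "vt_k n x k = (\<Sum>p<n. x p * sin (2 * pi * real k * real p / real n))"

definition e_plus :: "nat \<Rightarrow> nat \<Rightarrow> real" where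
  "e_plus n = (\<lambda>p. if p < n then 1 / real n else 0)"
definition e_minus :: "nat \<Rightarrow> nat \<Rightarrow> real" where
  "e_minus n = (\<lambda>p. if p < n then (-1) ^ p / real n else 0)"
definition e_k :: "nat \<Rightarrow> nat \<Rightarrow> nat \<Rightarrow> real" where
  "e_k n k = (\<lambda>p. if p < n then 2 / real n * cos (2 * pi * real k * real p / real n) else 0)"
definition et_k :: "nat \<Rightarrow> nat \<Rightarrow> nat \<Rightarrow> real" where
  "et_k n k = (\<lambda>p. if p < n then 2 / real n * sin (2 * pi * real k * real p / real n) else 0)"

end

theory Submission
  imports Defs
begin

(* With \<omega> = exp (2\<pi>i/n), the discrete Fourier transform \<lambda>_k(u) = \<Sum>_p x_p \<omega>^(kp) turns
  the product of polar n-complex numbers, a cyclic convolution, into a componentwise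
  product, so \<lambda>_k(u^j) = \<lambda>_k(u)^j. Fourier inversion then writes the m-th component of
  \<Sum>_j u^j/j! as (1/n) \<Sum>_k exp (\<lambda>_k(u)) \<omega>^(-km). As the x_p are real, \<lambda>_(n-k) is
  the conjugate of \<lambda>_k, so the terms k and n-k have equal real parts. Finally
  \<lambda>_k = v_k + i vt_k, \<lambda>_0 = v_+ and, for even n, \<lambda>_(n/2) = v_-, which turns these
  real parts into the coordinates in the canonical base. *)

definition unit_root :: "nat \<Rightarrow> complex" where
  "unit_root n = cis (2 * pi / real n)"

lemma unit_root_pow: "unit_root n ^ j = cis (2 * pi * real j / real n)"
  unfolding unit_root_def DeMoivre by (rule arg_cong[where f = cis]) simp

lemma unit_root_pow_self: "n > 0 \<Longrightarrow> unit_root n ^ n = 1"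
  unfolding unit_root_pow by simp

lemma cnj_unit_root_pow: "cnj (unit_root n ^ j) = inverse (unit_root n ^ j)"
  unfolding unit_root_pow cis_cnj by (simp add: cis_inverse)

lemma unit_root_pow_cong:
  assumes "n > 0" "i mod n = j mod n"
  shows "unit_root n ^ i = unit_root n ^ j"
proof -
  have "unit_root n ^ i = unit_root n ^ (i mod n)" for i
    using unit_root_pow_self[OF assms(1)]
    by (metis div_mult_mod_eq power_add power_mult mult.commute power_one mult_1)
  then show ?thesis
    using assms(2) by metis
qed

lemma unit_root_pow_reflect:
  assumes "k \<le> n" "n > 0"
  shows "unit_root n ^ ((n - k) * p) = cnj (unit_root n ^ (k * p))"
proof -
  have "(n - k) * p + k * p = n * p"
    using assms by (simp flip: add_mult_distrib)
  then have "unit_root n ^ ((n - k) * p) * unit_root n ^ (k * p) = 1"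
    using assms by (metis power_add power_mult unit_root_pow_self power_one)
  then show ?thesis
    unfolding cnj_unit_root_pow by (metis inverse_unique mult.commute)
qed

lemma unit_root_pow_half:
  assumes "even n" "n > 0"
  shows "unit_root n ^ (n div 2 * p) = (-1) ^ p"
proof -
  have "unit_root n ^ (n div 2) = cis pi"
    using assms unfolding unit_root_pow by (simp add: real_of_nat_div)
  then show ?thesis
    by (simp add: power_mult)
qed

lemma unit_root_pow_inj:
  assumes "p < n" "m < n" "unit_root n ^ p = unit_root n ^ m"
  shows "p = m"
  using inj_onD[OF bij_betw_imp_inj_on[OF bij_betw_roots_unity]] assms
  unfolding unit_root_pow by auto

lemma sum_unit_root_pow_orthogonal:
  assumes "p < n" "m < n"
  shows "(\<Sum>k<n. unit_root n ^ (k * p) * cnj (unit_root n) ^ (k * m))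
           = (if p = m then of_nat n else 0)"
proof -
  define z where "z = unit_root n ^ p * cnj (unit_root n ^ m)"
  have terms: "unit_root n ^ (k * p) * cnj (unit_root n) ^ (k * m) = z ^ k" for k
    unfolding z_def by (simp add: power_mult_distrib mult.commute flip: power_mult)
  have "z ^ n = (unit_root n ^ n) ^ p * cnj ((unit_root n ^ n) ^ m)"
    unfolding z_def by (simp add: power_mult_distrib mult.commute flip: power_mult)
  then have z_root: "z ^ n = 1"
    using assms by (simp add: unit_root_pow_self)
  have "unit_root n ^ m \<noteq> 0"
    by (simp add: unit_root_pow)
  then have "z = 1 \<longleftrightarrow> unit_root n ^ p = unit_root n ^ m"
    unfolding z_def cnj_unit_root_pow by (auto simp: field_simps)
  then have "z = 1 \<longleftrightarrow> p = m"
    using unit_root_pow_inj[OF assms] by blast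
  with z_root show ?thesis
    unfolding terms by (simp add: sum_gp_strict)
qed

definition dft :: "nat \<Rightarrow> (nat \<Rightarrow> real) \<Rightarrow> nat \<Rightarrow> complex" where
  "dft n y k = (\<Sum>p<n. of_real (y p) * unit_root n ^ (k * p))"

lemma dft_pc_mult:
  assumes "n > 0"
  shows "dft n (pc_mult n u w) k = dft n u k * dft n w k"
proof -
  let ?t = "\<lambda>j l m. of_real (u j * w l) * unit_root n ^ (k * m) :: complex"
  have "dft n (pc_mult n u w) k =
      (\<Sum>m<n. \<Sum>j<n. \<Sum>l<n. if (j + l) mod n = m then ?t j l m else 0)"
    unfolding dft_def pc_mult_def of_real_sum sum_distrib_right by (intro sum.cong refl) auto
  also have "\<dots> = (\<Sum>j<n. \<Sum>l<n. \<Sum>m<n. if (j + l) mod n = m then ?t j l m else 0)"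
    by (subst sum.swap, subst (2) sum.swap) (rule refl)
  also have "\<dots> = (\<Sum>j<n. \<Sum>l<n. ?t j l ((j + l) mod n))"
    using assms by (simp add: sum.delta)
  also have "\<dots> = (\<Sum>j<n. \<Sum>l<n. ?t j l (j + l))"
    using assms by (simp add: unit_root_pow_cong[of n "k * ((_ + _) mod n)"] mod_mult_right_eq)
  also have "\<dots> = dft n u k * dft n w k"
    unfolding dft_def sum_product by (simp add: distrib_left power_add mult_ac)
  finally show ?thesis .
qed

lemma dft_pc_one: "n > 0 \<Longrightarrow> dft n pc_one k = 1"
  unfolding dft_def pc_one_def by (simp add: if_distrib if_distribR cong: if_cong)

lemma dft_pc_pow: "n > 0 \<Longrightarrow> dft n (pc_pow n u j) k = dft n u k ^ j"
  by (induction j) (simp_all add: dft_pc_one dft_pc_mult)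

lemma dft_inverse:
  assumes "m < n"
  shows "of_real (y m) = (\<Sum>k<n. dft n y k * cnj (unit_root n) ^ (k * m)) / of_nat n"
proof -
  have "(\<Sum>k<n. dft n y k * cnj (unit_root n) ^ (k * m)) =
        (\<Sum>p<n. of_real (y p) * (\<Sum>k<n. unit_root n ^ (k * p) * cnj (unit_root n) ^ (k * m)))"
    unfolding dft_def sum_distrib_right sum_distrib_left by (subst sum.swap) (simp add: mult_ac)
  also have "\<dots> = of_real (y m) * of_nat n"
    using assms by (simp add: sum_unit_root_pow_orthogonal if_distrib if_distribR cong: if_cong)
  finally show ?thesis
    using assms by simp
qed

lemma dft_reflect: "k \<le> n \<Longrightarrow> n > 0 \<Longrightarrow> dft n y (n - k) = cnj (dft n y k)"
  unfolding dft_def by (simp add: unit_root_pow_reflect)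

lemma Re_dft: "Re (dft n y k) = v_k n y k"
  unfolding dft_def v_k_def unit_root_pow by (simp add: Re_sum mult.assoc)

lemma Im_dft: "Im (dft n y k) = vt_k n y k"
  unfolding dft_def vt_k_def unit_root_pow by (simp add: Im_sum mult.assoc)

lemma dft_zero: "dft n y 0 = of_real (v_plus n y)"
  unfolding dft_def v_plus_def by simp

lemma dft_half:
  assumes "even n" "n > 0"
  shows "dft n y (n div 2) = of_real (v_minus n y)"
  unfolding dft_def v_minus_def unit_root_pow_half[OF assms] of_real_sum by (simp add: mult.commute)

definition exp_mode :: "nat \<Rightarrow> (nat \<Rightarrow> real) \<Rightarrow> nat \<Rightarrow> nat \<Rightarrow> real" where
  "exp_mode n x m k = Re (exp (dft n x k) * cnj (unit_root n) ^ (k * m))"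

lemma sums_pc_pow_div_fact:
  assumes "n > 0" "m < n"
  shows "(\<lambda>j. pc_pow n x j m / fact j) sums ((\<Sum>k<n. exp_mode n x m k) / real n)"
proof -
  let ?c = "\<lambda>k. cnj (unit_root n) ^ (k * m)"
  have "(\<lambda>j. (\<Sum>k<n. (dft n x k ^ j /\<^sub>R fact j) * ?c k) / of_nat n) sums
        ((\<Sum>k<n. exp (dft n x k) * ?c k) / of_nat n)"
    by (intro sums_divide sums_sum sums_mult2 exp_converges)
  moreover have "(\<Sum>k<n. (dft n x k ^ j /\<^sub>R fact j) * ?c k) / of_nat n
      = of_real (pc_pow n x j m / fact j)" for j
    using dft_inverse[OF assms(2), of "pc_pow n x j"]
    by (simp add: dft_pc_pow[OF assms(1)] scaleR_conv_of_real sum_divide_distrib field_simps)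
  ultimately have "(\<lambda>j. of_real (pc_pow n x j m / fact j)) sums
      ((\<Sum>k<n. exp (dft n x k) * ?c k) / of_nat n)"
    by simp
  from sums_Re[OF this]
  have "(\<lambda>j. pc_pow n x j m / fact j) sums Re ((\<Sum>k<n. exp (dft n x k) * ?c k) / of_nat n)"
    by (simp only: Re_complex_of_real)
  then show ?thesis
    unfolding Re_divide_of_nat Re_sum exp_mode_def .
qed

lemma exp_mode_reflect:
  assumes "k \<le> n" "n > 0"
  shows "exp_mode n x m (n - k) = exp_mode n x m k"
proof -
  have exp_cnj: "exp (cnj z) = cnj (exp z)" for z
    by (simp add: exp_eq_polar cis_cnj)
  have "cnj (unit_root n) ^ ((n - k) * m) = cnj (cnj (unit_root n) ^ (k * m))"
    using unit_root_pow_reflect[OF assms] by (simp flip: complex_cnj_power)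
  then have "exp (dft n x (n - k)) * cnj (unit_root n) ^ ((n - k) * m)
      = cnj (exp (dft n x k) * cnj (unit_root n) ^ (k * m))"
    unfolding dft_reflect[OF assms] exp_cnj complex_cnj_mult by simp
  then show ?thesis
    unfolding exp_mode_def by (metis cnj.sel(1))
qed

lemma exp_mode_zero: "exp_mode n x m 0 = exp (v_plus n x)"
  unfolding exp_mode_def dft_zero by (simp add: exp_of_real)

lemma exp_mode_half:
  assumes "even n" "n > 0"
  shows "exp_mode n x m (n div 2) = (-1) ^ m * exp (v_minus n x)"
proof -
  have "cnj (unit_root n) ^ (n div 2 * m) = cnj (unit_root n ^ (n div 2 * m))"
    by simp
  also have "\<dots> = (-1) ^ m"
    unfolding unit_root_pow_half[OF assms] by simp
  finally show ?thesis
    unfolding exp_mode_def dft_half[OF assms] by (simp add: exp_of_real)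
qed

lemma exp_mode_canonical:
  assumes "m < n"
  shows "exp (v_k n x k) * (e_k n k m * cos (vt_k n x k) + et_k n k m * sin (vt_k n x k))
     = 2 / real n * exp_mode n x m k"
proof -
  let ?a = "2 * pi * real k * real m / real n"
  have "exp (dft n x k) * cnj (unit_root n) ^ (k * m)
      = of_real (exp (v_k n x k)) * cis (vt_k n x k - ?a)"
    unfolding exp_eq_polar Re_dft Im_dft
    by (simp add: unit_root_pow mult.assoc cis_cnj cis_mult flip: complex_cnj_power power_mult)
  then show ?thesis
    using assms unfolding exp_mode_def e_k_def et_k_def by (simp add: cos_diff algebra_simps)
qed

lemma sum_reflect:
  fixes F :: "nat \<Rightarrow> 'a::comm_monoid_add"
  assumes "\<And>k. k \<le> n \<Longrightarrow> F (n - k) = F k" "h < n"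
  shows "(\<Sum>k\<in>{n-h..n-1}. F k) = (\<Sum>k\<in>{1..h}. F k)"
  by (rule sum.reindex_bij_witness[where i = "\<lambda>k. n - k" and j = "\<lambda>k. n - k"])
    (use assms in auto)

lemma sum_lessThan_reflect_odd:
  fixes F :: "nat \<Rightarrow> 'a::comm_semiring_1"
  assumes "\<And>k. k \<le> n \<Longrightarrow> F (n - k) = F k" "odd n"
  shows "(\<Sum>k<n. F k) = F 0 + 2 * (\<Sum>k\<in>{1..(n - 1) div 2}. F k)"
proof -
  define h where "h = (n - 1) div 2"
  have n: "n = 2 * h + 1"
    using assms(2) unfolding h_def by presburger
  have "{..<n} = insert 0 ({1..h} \<union> {n-h..n-1})"
    using n by auto
  then have "(\<Sum>k<n. F k) = F 0 + ((\<Sum>k\<in>{1..h}. F k) + (\<Sum>k\<in>{n-h..n-1}. F k))"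
    using n by (simp add: sum.union_disjoint)
  then show ?thesis
    using sum_reflect[of n F h, OF assms(1)] n unfolding h_def by (simp add: mult_2)
qed

lemma sum_lessThan_reflect_even:
  fixes F :: "nat \<Rightarrow> 'a::comm_semiring_1"
  assumes "\<And>k. k \<le> n \<Longrightarrow> F (n - k) = F k" "even n" "n \<ge> 2"
  shows "(\<Sum>k<n. F k) = F 0 + F (n div 2) + 2 * (\<Sum>k\<in>{1..n div 2 - 1}. F k)"
proof -
  define h where "h = n div 2 - 1"
  have n: "n = 2 * h + 2"
    using assms(2,3) unfolding h_def by presburger
  have "{..<n} = insert 0 (insert (n div 2) ({1..h} \<union> {n-h..n-1}))"
    using n by auto
  then have "(\<Sum>k<n. F k)
      = F 0 + (F (n div 2) + ((\<Sum>k\<in>{1..h}. F k) + (\<Sum>k\<in>{n-h..n-1}. F k)))"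
    using n by (simp add: sum.union_disjoint)
  then show ?thesis
    using sum_reflect[of n F h, OF assms(1)] n unfolding h_def by (simp add: mult_2 add.assoc)
qed

theorem mainTheorem12:
  fixes n :: nat and x :: "nat \<Rightarrow> real"
  assumes "n \<ge> 2"
  shows "(even n \<longrightarrow> (\<forall>m<n. (\<lambda>j. pc_pow n x j m / fact j) sums
            (e_plus n m * exp (v_plus n x) + e_minus n m * exp (v_minus n x)
             + (\<Sum>k\<in>{1..n div 2 - 1}. exp (v_k n x k) *
                  (e_k n k m * cos (vt_k n x k) + et_k n k m * sin (vt_k n x k))))))
       \<and> (odd n \<longrightarrow> (\<forall>m<n. (\<lambda>j. pc_pow n x j m / fact j) sums
            (e_plus n m * exp (v_plus n x)
             + (\<Sum>k\<in>{1..(n - 1) div 2}. exp (v_k n x k) *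
                  (e_k n k m * cos (vt_k n x k) + et_k n k m * sin (vt_k n x k))))))"
proof -
  have n: "n > 0"
    using assms by simp
  have sum_even: "(\<Sum>k<n. exp_mode n x m k) = exp (v_plus n x) + (-1) ^ m * exp (v_minus n x)
      + 2 * (\<Sum>k\<in>{1..n div 2 - 1}. exp_mode n x m k)" if "even n" for m
    using sum_lessThan_reflect_even[of n "exp_mode n x m", OF exp_mode_reflect[OF _ n] that assms]
    by (simp add: exp_mode_zero exp_mode_half[OF that n])
  have sum_odd: "(\<Sum>k<n. exp_mode n x m k)
      = exp (v_plus n x) + 2 * (\<Sum>k\<in>{1..(n - 1) div 2}. exp_mode n x m k)" if "odd n" for m
    using sum_lessThan_reflect_odd[of n "exp_mode n x m", OF exp_mode_reflect[OF _ n] that]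
    by (simp add: exp_mode_zero)
  have canonical: "(\<Sum>k\<in>K. exp (v_k n x k) *
        (e_k n k m * cos (vt_k n x k) + et_k n k m * sin (vt_k n x k)))
      = 2 / real n * (\<Sum>k\<in>K. exp_mode n x m k)" if "m < n" for m K
    using exp_mode_canonical[OF that] by (simp add: sum_distrib_left)
  show ?thesis
    apply (intro conjI impI allI)
    subgoal premises prems for m
      using sums_pc_pow_div_fact[OF n prems(2), of x] prems
      unfolding sum_even[OF prems(1)]
      by (simp add: canonical e_plus_def e_minus_def add_divide_distrib)
    subgoal premises prems for m
      using sums_pc_pow_div_fact[OF n prems(2), of x] prems
      unfolding sum_odd[OF prems(1)]
      by (simp add: canonical e_plus_def add_divide_distrib)
    done
qed

end
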